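(* Let $\mathbb{F}$ be either $\mathbb{Q}$ or $\mathbb{Z}_q$ for a prime $q$, and fix a Frege proof system. The non-commutative IPS over $\mathbb{F}$, with refutations written as non-commutative formulas, polynomially simulates Frege: there is a polynomial $p$ such that for every propositional tautology $T$ in variables $x_1,\dots,x_n$, if $T$ has a Frege proof of size $S$, then there is a non-commutative IPS certificate over $\mathbb{F}$ refuting the system consisting of the single equation $\mathrm{tr}(\neg T)=0$ (together with the Boolean and commutator axioms) whose non-commutative formula size is at most $p(S)$. In particular, if $T$ has a polynomial-size Frege proof then such a certificate of polynomial non-commutative formula size exists.
   Context: A Frege proof system is a propositional proof system with finitely many sound axiom schemes and inference rules (each rule $\frac{A_1,\dots,A_k}{A_0}$ applied via substitution instances), implicationally complete, whose lines are Boolean formulas over $\lor,\land,\neg$; the size of a proof is the total size of its formulas. A non-commutative formula over $\mathbb{F}$ is a fan-in-two rooted tree whose leaves are labeled by variables or field elements and whose internal nodes are $+$ or $\times$ gates, with the children of each $\times$ gate ordered; it computes a polynomial in the free algebra $\mathbb{F}\langle x_1,x_2,\dots\rangle$ (non-commuting variables). Its size is its number of nodes. Translation $\mathrm{tr}$: $\mathrm{tr}(x_i)=x_i$, $\mathrm{tr}(\mathsf{false})=1$, $\mathrm{tr}(\mathsf{true})=0$, $\mathrm{tr}(\neg T_1)=1-\mathrm{tr}(T_1)$, $\mathrm{tr}(T_1\lor T_2)=\mathrm{tr}(T_1)\cdot\mathrm{tr}(T_2)$, $\mathrm{tr}(T_1\land T_2)=1-(1-\mathrm{tr}(T_1))\cdot(1-\mathrm{tr}(T_2))$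 (so $0$ represents true). Non-commutative IPS: given non-commutative polynomials $F_1,\dots,F_m\in\mathbb{F}\langle x_1,\dots,x_n\rangle$ that include the Boolean axioms $x_i(1-x_i)$ ($1\le i\le n$) and the commutator axioms $x_ix_j-x_jx_i$ ($1\le i<j\le n$) and have no common $0$-$1$ solution, a certificate (refutation) is a non-commutative polynomial $\mathfrak{F}(\bar x,y_1,\dots,y_m)\in\mathbb{F}\langle\bar x,\bar y\rangle$ with $\mathfrak{F}(\bar x,\bar 0)=0$ and $\mathfrak{F}(\bar x,F_1(\bar x),\dots,F_m(\bar x))=1$ as identities in $\mathbb{F}\langle \bar x\rangle$. Its size is the minimal size of a non-commutative formula computing it. *)

theory Defs
  imports "HOL-Computational_Algebra.Polynomial" "Berlekamp_Zassenhaus.Finite_Field"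
begin

datatype fm = FVar nat | FTrue | FFalse | FNot fm | FOr fm fm | FAnd fm fm

primrec feval :: "(nat \<Rightarrow> bool) \<Rightarrow> fm \<Rightarrow> bool" where
  "feval a (FVar i) = a i"
| "feval a FTrue = True"
| "feval a FFalse = False"
| "feval a (FNot A) = (\<not> feval a A)"
| "feval a (FOr A B) = (feval a A \<or> feval a B)"
| "feval a (FAnd A B) = (feval a A \<and> feval a B)"

primrec atoms :: "fm \<Rightarrow> nat set" where
  "atoms (FVar i) = {i}"
| "atoms FTrue = {}"
| "atoms FFalse = {}"
| "atoms (FNot A) = atoms A"
| "atoms (FOr A B) = atoms A \<union> atoms B"
| "atoms (FAnd A B) = atoms A \<union> atoms B"

primrec fsize :: "fm \<Rightarrow> nat" where
  "fsize (FVar i) = 1"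
| "fsize FTrue = 1"
| "fsize FFalse = 1"
| "fsize (FNot A) = 1 + fsize A"
| "fsize (FOr A B) = 1 + fsize A + fsize B"
| "fsize (FAnd A B) = 1 + fsize A + fsize B"

primrec fsubst :: "(nat \<Rightarrow> fm) \<Rightarrow> fm \<Rightarrow> fm" where
  "fsubst \<sigma> (FVar i) = \<sigma> i"
| "fsubst \<sigma> FTrue = FTrue"
| "fsubst \<sigma> FFalse = FFalse"
| "fsubst \<sigma> (FNot A) = FNot (fsubst \<sigma> A)"
| "fsubst \<sigma> (FOr A B) = FOr (fsubst \<sigma> A) (fsubst \<sigma> B)"
| "fsubst \<sigma> (FAnd A B) = FAnd (fsubst \<sigma> A) (fsubst \<sigma> B)"

definition tautology :: "fm \<Rightarrow> bool" where
  "tautology A \<longleftrightarrow> (\<forall>a. feval a A)"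

text \<open>A rule A_1,...,A_k / A_0 is a pair (premises, conclusion); axiom schemes are
  rules with no premises.\<close>
type_synonym rule = "fm list \<times> fm"

definition sound_rule :: "rule \<Rightarrow> bool" where
  "sound_rule r \<longleftrightarrow> (\<forall>a. (\<forall>A \<in> set (fst r). feval a A) \<longrightarrow> feval a (snd r))"

definition derivation :: "rule set \<Rightarrow> fm set \<Rightarrow> fm list \<Rightarrow> bool" where
  "derivation R \<Gamma> \<pi> \<longleftrightarrow> (\<forall>k < length \<pi>. \<pi> ! k \<in> \<Gamma> \<or>
     (\<exists>r \<in> R. \<exists>\<sigma>. fsubst \<sigma> (snd r) = \<pi> ! k \<and>
        (\<forall>P \<in> set (fst r). \<exists>j < k. \<pi> ! j = fsubst \<sigma> P)))"

definition frege_system :: "rule set \<Rightarrow> bool" where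
  "frege_system R \<longleftrightarrow> finite R \<and> (\<forall>r \<in> R. sound_rule r) \<and>
     (\<forall>\<Gamma> A. finite \<Gamma> \<longrightarrow> (\<forall>a. (\<forall>B \<in> \<Gamma>. feval a B) \<longrightarrow> feval a A) \<longrightarrow>
        (\<exists>\<pi>. \<pi> \<noteq> [] \<and> last \<pi> = A \<and> derivation R \<Gamma> \<pi>))"

definition frege_proof :: "rule set \<Rightarrow> fm list \<Rightarrow> fm \<Rightarrow> bool" where
  "frege_proof R \<pi> A \<longleftrightarrow> \<pi> \<noteq> [] \<and> last \<pi> = A \<and> derivation R {} \<pi>"

definition proof_size :: "fm list \<Rightarrow> nat" where
  "proof_size \<pi> = sum_list (map fsize \<pi>)"

datatype ('a, 'v) ncf = NVar 'v | NConst 'a | NAdd "('a, 'v) ncf" "('a, 'v) ncf"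
  | NMul "('a, 'v) ncf" "('a, 'v) ncf"

primrec ncf_size :: "('a, 'v) ncf \<Rightarrow> nat" where
  "ncf_size (NVar v) = 1"
| "ncf_size (NConst c) = 1"
| "ncf_size (NAdd f g) = 1 + ncf_size f + ncf_size g"
| "ncf_size (NMul f g) = 1 + ncf_size f + ncf_size g"

primrec ncf_vars :: "('a, 'v) ncf \<Rightarrow> 'v set" where
  "ncf_vars (NVar v) = {v}"
| "ncf_vars (NConst c) = {}"
| "ncf_vars (NAdd f g) = ncf_vars f \<union> ncf_vars g"
| "ncf_vars (NMul f g) = ncf_vars f \<union> ncf_vars g"

text \<open>Elements of the free algebra over variables 'v are represented by their
  coefficient functions on words (monomials = lists of variables).\<close>
primrec ncpoly :: "('a::comm_ring_1, 'v) ncf \<Rightarrow> 'v list \<Rightarrow> 'a" where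
  "ncpoly (NVar v) = (\<lambda>w. if w = [v] then 1 else 0)"
| "ncpoly (NConst c) = (\<lambda>w. if w = [] then c else 0)"
| "ncpoly (NAdd f g) = (\<lambda>w. ncpoly f w + ncpoly g w)"
| "ncpoly (NMul f g) = (\<lambda>w. \<Sum>i\<in>{0..length w}. ncpoly f (take i w) * ncpoly g (drop i w))"

definition ncpoly_zero :: "'v list \<Rightarrow> 'a::comm_ring_1" where
  "ncpoly_zero = (\<lambda>w. 0)"

definition ncpoly_one :: "'v list \<Rightarrow> 'a::comm_ring_1" where
  "ncpoly_one = (\<lambda>w. if w = [] then 1 else 0)"

primrec ncsubst :: "('v \<Rightarrow> ('a, 'u) ncf) \<Rightarrow> ('a, 'v) ncf \<Rightarrow> ('a, 'u) ncf" where
  "ncsubst \<sigma> (NVar v) = \<sigma> v"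
| "ncsubst \<sigma> (NConst c) = NConst c"
| "ncsubst \<sigma> (NAdd f g) = NAdd (ncsubst \<sigma> f) (ncsubst \<sigma> g)"
| "ncsubst \<sigma> (NMul f g) = NMul (ncsubst \<sigma> f) (ncsubst \<sigma> g)"

definition ncminus1 :: "('a::comm_ring_1, 'v) ncf \<Rightarrow> ('a, 'v) ncf" where
  "ncminus1 f = NAdd (NConst 1) (NMul (NConst (-1)) f)"

section \<open>Translation tr (0 represents true)\<close>

primrec tr :: "fm \<Rightarrow> ('a::comm_ring_1, nat) ncf" where
  "tr (FVar i) = NVar i"
| "tr FFalse = NConst 1"
| "tr FTrue = NConst 0"
| "tr (FNot A) = ncminus1 (tr A)"
| "tr (FOr A B) = NMul (tr A) (tr B)"
| "tr (FAnd A B) = ncminus1 (NMul (ncminus1 (tr A)) (ncminus1 (tr B)))"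

text \<open>Indices of the axioms: the single equation tr(not T) = 0, the Boolean axioms
  x_i(1-x_i), 1 <= i <= n, and the commutator axioms x_i x_j - x_j x_i, 1 <= i < j <= n.\<close>
datatype axidx = AxT | AxBool nat | AxComm nat nat

datatype cvar = X nat | Y axidx

fun valid_ax :: "nat \<Rightarrow> axidx \<Rightarrow> bool" where
  "valid_ax n AxT = True"
| "valid_ax n (AxBool i) = (1 \<le> i \<and> i \<le> n)"
| "valid_ax n (AxComm i j) = (1 \<le> i \<and> i < j \<and> j \<le> n)"

fun ax_poly :: "fm \<Rightarrow> axidx \<Rightarrow> ('a::comm_ring_1, nat) ncf" where
  "ax_poly T AxT = tr (FNot T)"
| "ax_poly T (AxBool i) = NMul (NVar i) (ncminus1 (NVar i))"
| "ax_poly T (AxComm i j) = NAdd (NMul (NVar i) (NVar j)) (NMul (NConst (-1)) (NMul (NVar j) (NVar i)))"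

text \<open>Phi is a non-commutative formula in variables x_1..x_n and the placeholder
  variables y_a (a a valid axiom index) computing a certificate:
  Phi(x, 0) = 0 and Phi(x, F_1(x), ..., F_m(x)) = 1 in the free algebra.\<close>
definition nc_ips_cert :: "nat \<Rightarrow> fm \<Rightarrow> ('a::comm_ring_1, cvar) ncf \<Rightarrow> bool" where
  "nc_ips_cert n T \<Phi> \<longleftrightarrow>
     (\<forall>v \<in> ncf_vars \<Phi>. case v of X i \<Rightarrow> 1 \<le> i \<and> i \<le> n | Y a \<Rightarrow> valid_ax n a) \<and>
     ncpoly (ncsubst (\<lambda>v. case v of X i \<Rightarrow> NVar i | Y a \<Rightarrow> NConst 0) \<Phi>) = ncpoly_zero \<and>
     ncpoly (ncsubst (\<lambda>v. case v of X i \<Rightarrow> NVar i | Y a \<Rightarrow> ax_poly T a) \<Phi>) = ncpoly_one"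

end

theory Submission
  imports Defs "HOL-Library.Poly_Mapping"
begin

text \<open>
  Call \<open>r\<close> in the free algebra derivable at cost \<open>s\<close> if some non-commutative formula of
  size at most \<open>s\<close> in the variables \<open>x\<close> and the placeholders \<open>y\<close> of the axioms vanishes at
  \<open>y = 0\<close> and evaluates to \<open>r\<close> when the axioms are substituted for \<open>y\<close>; if \<open>tr T\<close> is
  derivable, adding the placeholder of the axiom \<open>tr (\<not> T) = 1 - tr T\<close> gives a refutation.
  Derivable elements are closed under sums and under two-sided multiplication, and the
  commutator and the Boolean defect \<open>tr A \<cdot> (1 - tr A)\<close> of translated formulas are derivable at
  polynomial cost from the commutator and Boolean axioms. With these, Shannon expansion on one
  atom at a time derives every substitution instance of a fixed tautology at cost polynomial in
  the size of the substituted formulas; the exponential dependence on the tautology itself is a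
  constant once the Frege system is fixed. Applied to the implications ``premises imply
  conclusion'' of the rules, an induction along a Frege proof derives
  \<open>1 - tr (\<not> \<pi>\<^sub>1 \<or> \<dots> \<or> \<not> \<pi>\<^sub>k)\<close>, which says that the first \<open>k\<close> lines all hold, and
  from it the last line \<open>T\<close>.
\<close>

section \<open>The free algebra\<close>

text \<open>Monomials are words; the wrapper type carries the concatenation monoid that the
  multiplication of \<open>'a \<Rightarrow>\<^sub>0 'b\<close> requires.\<close>

datatype 'v word = Word "'v list"

instantiation word :: (type) monoid_add
begin

definition zero_word :: "'v word" where
  "zero_word = Word []"

fun plus_word :: "'v word \<Rightarrow> 'v word \<Rightarrow> 'v word" where
  "plus_word (Word u) (Word v) = Word (u @ v)"

instance
proof
  fix a b c :: "'v word"
  show "a + b + c = a + (b + c)" by (cases a; cases b; cases c) simp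
  show "0 + a = a" by (cases a) (simp add: zero_word_def)
  show "a + 0 = a" by (cases a) (simp add: zero_word_def)
qed

end

lemma Word_eq_plus_iff:
  "Word w = Word u + q \<longleftrightarrow> take (length u) w = u \<and> q = Word (drop (length u) w)"
  by (cases q) (auto simp: append_eq_conv_conj, metis append_take_drop_id)

lemma lookup_times_Word:
  fixes p q :: "'v word \<Rightarrow>\<^sub>0 'a::comm_ring_1"
  shows "Poly_Mapping.lookup (p * q) (Word w) =
    (\<Sum>i\<in>{0..length w}. Poly_Mapping.lookup p (Word (take i w)) * Poly_Mapping.lookup q (Word (drop i w)))"
proof -
  define P where "P = (\<lambda>i. Word (take i w)) ` {0..length w}"
  define g where "g l = Poly_Mapping.lookup p l * Sum_any (\<lambda>l'. Poly_Mapping.lookup q l' when Word w = l + l')"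
    for l
  have g: "g (Word u) = Poly_Mapping.lookup p (Word u) *
      (Poly_Mapping.lookup q (Word (drop (length u) w)) when take (length u) w = u)" for u
    unfolding g_def by (cases "take (length u) w = u") (simp_all add: Word_eq_plus_iff when_def)
  have "Poly_Mapping.lookup (p * q) (Word w) = Sum_any g"
    by (simp add: Poly_Mapping.lookup_mult g_def)
  also have "\<dots> = sum g P"
  proof (rule Sum_any.expand_superset)
    show "finite P" by (simp add: P_def)
    show "{l. g l \<noteq> 0} \<subseteq> P"
    proof
      fix l assume "l \<in> {l. g l \<noteq> 0}"
      moreover obtain u where "l = Word u" by (cases l)
      ultimately have "take (length u) w = u" by (simp add: g) (auto simp: when_def split: if_splits)
      then show "l \<in> P" unfolding P_def using \<open>l = Word u\<close>
        by (intro image_eqI[of _ _ "length u"]) (auto, metis length_take min.bounded_iff nle_le)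
    qed
  qed
  also have "\<dots> = (\<Sum>i\<in>{0..length w}. Poly_Mapping.lookup p (Word (take i w)) * Poly_Mapping.lookup q (Word (drop i w)))"
  proof -
    have "inj_on (\<lambda>i. Word (take i w)) {0..length w}"
      by (auto simp: inj_on_def) (metis length_take min.absorb2)
    then show ?thesis
      unfolding P_def by (subst sum.reindex) (auto simp: g min_absorb2 intro!: sum.cong)
  qed
  finally show ?thesis .
qed

lemma lookup_single_zero_Word:
  "Poly_Mapping.lookup (Poly_Mapping.single 0 c) (Word w) = (if w = [] then c else 0)"
  by (simp add: Poly_Mapping.lookup_single zero_word_def when_def)

lemma single_zero_mult_commute:
  fixes p :: "'v word \<Rightarrow>\<^sub>0 'a::comm_ring_1"
  shows "Poly_Mapping.single 0 c * p = p * Poly_Mapping.single 0 c"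
proof (rule poly_mapping_eqI)
  fix k :: "'v word"
  obtain w where k: "k = Word w" by (cases k)
  have "Poly_Mapping.lookup (Poly_Mapping.single 0 c * p) (Word w) =
      (\<Sum>i\<in>{0}. (if take i w = [] then c else 0) * Poly_Mapping.lookup p (Word (drop i w)))"
    unfolding lookup_times_Word lookup_single_zero_Word by (rule sum.mono_neutral_right) auto
  moreover have "Poly_Mapping.lookup (p * Poly_Mapping.single 0 c) (Word w) =
      (\<Sum>i\<in>{length w}. Poly_Mapping.lookup p (Word (take i w)) * (if drop i w = [] then c else 0))"
    unfolding lookup_times_Word lookup_single_zero_Word by (rule sum.mono_neutral_right) auto
  ultimately show "Poly_Mapping.lookup (Poly_Mapping.single 0 c * p) k =
      Poly_Mapping.lookup (p * Poly_Mapping.single 0 c) k"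
    by (simp add: k mult.commute)
qed

primrec ncf_eval :: "('a::comm_ring_1, 'v) ncf \<Rightarrow> 'v word \<Rightarrow>\<^sub>0 'a" where
  "ncf_eval (NVar v) = Poly_Mapping.single (Word [v]) 1"
| "ncf_eval (NConst c) = Poly_Mapping.single 0 c"
| "ncf_eval (NAdd f g) = ncf_eval f + ncf_eval g"
| "ncf_eval (NMul f g) = ncf_eval f * ncf_eval g"

lemma lookup_ncf_eval: "Poly_Mapping.lookup (ncf_eval f) (Word w) = ncpoly f w"
proof (induction f arbitrary: w)
  case (NVar v)
  then show ?case by (simp add: Poly_Mapping.lookup_single when_def)
next
  case (NConst c)
  then show ?case by (simp add: lookup_single_zero_Word)
next
  case (NAdd f g)
  then show ?case by (simp add: lookup_add)
next
  case (NMul f g)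
  then show ?case by (simp add: lookup_times_Word)
qed

lemma ncpoly_eq_zero_if_ncf_eval: "ncf_eval f = 0 \<Longrightarrow> ncpoly f = ncpoly_zero"
  by (rule ext) (metis lookup_ncf_eval lookup_zero ncpoly_zero_def)

lemma ncpoly_eq_one_if_ncf_eval:
  assumes "ncf_eval f = 1"
  shows "ncpoly f = ncpoly_one"
proof
  fix w
  show "ncpoly f w = ncpoly_one w"
    using assms lookup_ncf_eval[of f w] by (simp add: ncpoly_one_def lookup_one when_def zero_word_def)
qed

lemma ncf_eval_ncminus1 [simp]: "ncf_eval (ncminus1 f) = 1 - ncf_eval f"
  by (simp add: ncminus1_def single_uminus)

declare ncf_eval.simps(1) [simp del] single_uminus [simp]

type_synonym 'a free_alg = "nat word \<Rightarrow>\<^sub>0 'a"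

abbreviation tr_eval :: "fm \<Rightarrow> 'a::comm_ring_1 free_alg" where
  "tr_eval A \<equiv> ncf_eval (tr A)"

primrec tr_size :: "fm \<Rightarrow> nat" where
  "tr_size (FVar i) = 1"
| "tr_size FTrue = 1"
| "tr_size FFalse = 1"
| "tr_size (FNot A) = tr_size A + 4"
| "tr_size (FOr A B) = tr_size A + tr_size B + 1"
| "tr_size (FAnd A B) = tr_size A + tr_size B + 13"

lemma ncf_size_tr [simp]: "ncf_size (tr A) = tr_size A"
  by (induction A) (auto simp: ncminus1_def)

lemma ncf_vars_tr [simp]: "ncf_vars (tr A) = atoms A"
  by (induction A) (auto simp: ncminus1_def)

lemma fsize_le_tr_size: "fsize A \<le> tr_size A"
  by (induction A) auto

lemma tr_size_le_fsize: "tr_size A \<le> 13 * fsize A"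
  by (induction A) auto

lemma fsize_pos: "1 \<le> fsize A"
  by (cases A) auto

lemma tr_size_pos: "1 \<le> tr_size A"
  using fsize_le_tr_size fsize_pos le_trans by blast

section \<open>Derivable elements\<close>

definition erase_axioms :: "cvar \<Rightarrow> ('a::comm_ring_1, nat) ncf" where
  "erase_axioms = (\<lambda>v. case v of X i \<Rightarrow> NVar i | Y a \<Rightarrow> NConst 0)"

definition plug_axioms :: "fm \<Rightarrow> cvar \<Rightarrow> ('a::comm_ring_1, nat) ncf" where
  "plug_axioms T = (\<lambda>v. case v of X i \<Rightarrow> NVar i | Y a \<Rightarrow> ax_poly T a)"

definition admissible_vars :: "nat \<Rightarrow> ('a, cvar) ncf \<Rightarrow> bool" where
  "admissible_vars n \<Psi> \<longleftrightarrow>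
     (\<forall>v \<in> ncf_vars \<Psi>. case v of X i \<Rightarrow> 1 \<le> i \<and> i \<le> n | Y a \<Rightarrow> valid_ax n a)"

text \<open>An IPS certificate of size at most \<open>s\<close>, but with \<open>r\<close> in place of \<open>1\<close>.\<close>

definition derivable :: "nat \<Rightarrow> fm \<Rightarrow> 'a::comm_ring_1 free_alg \<Rightarrow> nat \<Rightarrow> bool" where
  "derivable n T r s \<longleftrightarrow> (\<exists>\<Psi> :: ('a, cvar) ncf. admissible_vars n \<Psi> \<and>
     ncf_eval (ncsubst erase_axioms \<Psi>) = 0 \<and> ncf_eval (ncsubst (plug_axioms T) \<Psi>) = r \<and>
     ncf_size \<Psi> \<le> s)"

lemma nc_ips_cert_if_derivable:
  assumes "derivable n T (tr_eval T :: 'a::comm_ring_1 free_alg) s"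
  shows "\<exists>\<Phi> :: ('a, cvar) ncf. nc_ips_cert n T \<Phi> \<and> ncf_size \<Phi> \<le> s + 2"
proof -
  obtain \<Psi> :: "('a, cvar) ncf" where \<Psi>: "admissible_vars n \<Psi>" "ncf_eval (ncsubst erase_axioms \<Psi>) = 0"
    "ncf_eval (ncsubst (plug_axioms T) \<Psi>) = tr_eval T" "ncf_size \<Psi> \<le> s"
    using assms unfolding derivable_def by blast
  define \<Phi> where "\<Phi> = NAdd (NVar (Y AxT)) \<Psi>"
  have "nc_ips_cert n T \<Phi>"
    unfolding nc_ips_cert_def
  proof (intro conjI)
    show "\<forall>v\<in>ncf_vars \<Phi>. case v of X i \<Rightarrow> 1 \<le> i \<and> i \<le> n | Y a \<Rightarrow> valid_ax n a"
      using \<Psi>(1) by (auto simp: \<Phi>_def admissible_vars_def)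
    show "ncpoly (ncsubst (\<lambda>v. case v of X i \<Rightarrow> NVar i | Y a \<Rightarrow> NConst 0) \<Phi>) = ncpoly_zero"
      using \<Psi>(2) by (intro ncpoly_eq_zero_if_ncf_eval) (simp add: \<Phi>_def erase_axioms_def)
    show "ncpoly (ncsubst (\<lambda>v. case v of X i \<Rightarrow> NVar i | Y a \<Rightarrow> ax_poly T a) \<Phi>) = ncpoly_one"
      using \<Psi>(3) by (intro ncpoly_eq_one_if_ncf_eval) (simp add: \<Phi>_def plug_axioms_def)
  qed
  moreover have "ncf_size \<Phi> \<le> s + 2"
    using \<Psi>(4) by (simp add: \<Phi>_def)
  ultimately show ?thesis by blast
qed

lemma derivable_mono: "derivable n T r s \<Longrightarrow> s \<le> s' \<Longrightarrow> derivable n T r s'"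
  unfolding derivable_def by (blast intro: order_trans)

lemma derivable_cong: "derivable n T r s \<Longrightarrow> r = r' \<Longrightarrow> s \<le> s' \<Longrightarrow> derivable n T r' s'"
  using derivable_mono by blast

lemma derivable_zero: "1 \<le> s \<Longrightarrow> derivable n T 0 s"
  unfolding derivable_def by (rule exI[of _ "NConst 0"]) (simp add: admissible_vars_def)

lemma derivable_add:
  "derivable n T r s \<Longrightarrow> derivable n T r' s' \<Longrightarrow> derivable n T (r + r') (s + s' + 1)"
  unfolding derivable_def
  apply (elim exE conjE)
  subgoal for \<Psi> \<Psi>' by (intro exI[of _ "NAdd \<Psi> \<Psi>'"]) (auto simp: admissible_vars_def)
  done

lemma derivable_uminus: "derivable n T r s \<Longrightarrow> derivable n T (- r) (s + 2)"
  unfolding derivable_def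
  apply (elim exE conjE)
  subgoal for \<Psi> by (intro exI[of _ "NMul (NConst (-1)) \<Psi>"]) (auto simp: admissible_vars_def)
  done

lemma derivable_diff:
  "derivable n T r s \<Longrightarrow> derivable n T r' s' \<Longrightarrow> derivable n T (r - r') (s + s' + 3)"
  by (erule derivable_cong[OF derivable_add[OF _ derivable_uminus]]) auto

definition lift_x :: "('a, nat) ncf \<Rightarrow> ('a, cvar) ncf" where
  "lift_x A = ncsubst (\<lambda>i. NVar (X i)) A"

lemma ncf_size_lift_x [simp]: "ncf_size (lift_x A) = ncf_size A"
  unfolding lift_x_def by (induction A) auto

lemma ncf_vars_lift_x [simp]: "ncf_vars (lift_x A) = X ` ncf_vars A"
  unfolding lift_x_def by (induction A) auto

lemma ncsubst_lift_x:
  assumes "\<And>i. \<sigma> (X i) = NVar i"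
  shows "ncsubst \<sigma> (lift_x A) = A"
  unfolding lift_x_def using assms by (induction A) auto

lemma derivable_mult_left:
  "derivable n T r s \<Longrightarrow> ncf_vars A \<subseteq> {1..n} \<Longrightarrow> derivable n T (ncf_eval A * r) (s + ncf_size A + 1)"
  unfolding derivable_def
  apply (elim exE conjE)
  subgoal for \<Psi> by (intro exI[of _ "NMul (lift_x A) \<Psi>"])
      (auto simp: admissible_vars_def ncsubst_lift_x erase_axioms_def plug_axioms_def)
  done

lemma derivable_mult_right:
  "derivable n T r s \<Longrightarrow> ncf_vars A \<subseteq> {1..n} \<Longrightarrow> derivable n T (r * ncf_eval A) (s + ncf_size A + 1)"
  unfolding derivable_def
  apply (elim exE conjE)
  subgoal for \<Psi> by (intro exI[of _ "NMul \<Psi> (lift_x A)"])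
      (auto simp: admissible_vars_def ncsubst_lift_x erase_axioms_def plug_axioms_def)
  done

lemma derivable_boolean_axiom:
  "1 \<le> i \<Longrightarrow> i \<le> n \<Longrightarrow> derivable n T (ncf_eval (NVar i) * (1 - ncf_eval (NVar i))) 1"
  unfolding derivable_def
  by (intro exI[of _ "NVar (Y (AxBool i))"])
    (simp add: admissible_vars_def erase_axioms_def plug_axioms_def)

lemma derivable_commutator_axiom:
  "1 \<le> i \<Longrightarrow> i < j \<Longrightarrow> j \<le> n \<Longrightarrow>
   derivable n T (ncf_eval (NVar i) * ncf_eval (NVar j) - ncf_eval (NVar j) * ncf_eval (NVar i)) 1"
  unfolding derivable_def
  by (intro exI[of _ "NVar (Y (AxComm i j))"])
    (simp add: admissible_vars_def erase_axioms_def plug_axioms_def)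

lemma derivable_tr_mult_left:
  "derivable n T r s \<Longrightarrow> atoms A \<subseteq> {1..n} \<Longrightarrow> derivable n T (tr_eval A * r) (s + tr_size A + 1)"
  using derivable_mult_left[of n T r s "tr A"] by simp

lemma derivable_tr_mult_right:
  "derivable n T r s \<Longrightarrow> atoms A \<subseteq> {1..n} \<Longrightarrow> derivable n T (r * tr_eval A) (s + tr_size A + 1)"
  using derivable_mult_right[of n T r s "tr A"] by simp

section \<open>Commutators and Boolean defects\<close>

lemma ncf_size_pos: "1 \<le> ncf_size f"
  by (cases f) auto

lemma nat_le_power:
  assumes "(a::nat) \<le> N" "1 \<le> k"
  shows "a \<le> N ^ k"
proof (cases "N = 0")
  case False
  then have "N ^ 1 \<le> N ^ k" using assms(2) by (intro power_increasing) auto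
  then show ?thesis using assms(1) by simp
qed (use assms in simp)

lemma nat_sq_mult_sq_le: "(a::nat) \<le> N \<Longrightarrow> b \<le> N \<Longrightarrow> a\<^sup>2 * b\<^sup>2 \<le> N ^ 4"
proof -
  assume "a \<le> N" "b \<le> N"
  then have "a\<^sup>2 * b\<^sup>2 \<le> N\<^sup>2 * N\<^sup>2" by (intro power_mono mult_le_mono) auto
  then show ?thesis by (simp flip: power_add)
qed

lemma derivable_commutator_NVar:
  assumes "i \<in> {1..n}"
  shows "ncf_vars b \<subseteq> {1..n} \<Longrightarrow>
    derivable n T (ncf_eval (NVar i) * ncf_eval b - ncf_eval b * ncf_eval (NVar i)) (3 * ncf_size b ^ 2)"
proof (induction b)
  case (NVar j)
  consider "i = j" | "i < j" | "j < i" by linarith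
  then show ?case
  proof cases
    case 1
    then show ?thesis by (simp add: derivable_zero)
  next
    case 2
    then show ?thesis using NVar assms by (auto intro!: derivable_mono[OF derivable_commutator_axiom])
  next
    case 3
    then show ?thesis using NVar assms derivable_uminus[OF derivable_commutator_axiom[of j i n T]]
      by (auto elim!: derivable_mono)
  qed
next
  case (NConst c)
  then show ?case by (simp add: derivable_zero single_zero_mult_commute)
next
  case (NAdd b1 b2)
  then have "derivable n T
      (ncf_eval (NVar i) * ncf_eval b1 - ncf_eval b1 * ncf_eval (NVar i) +
       (ncf_eval (NVar i) * ncf_eval b2 - ncf_eval b2 * ncf_eval (NVar i)))
      (3 * ncf_size b1 ^ 2 + 3 * ncf_size b2 ^ 2 + 1)"
    by (intro derivable_add) auto
  then show ?case by (rule derivable_cong) (simp_all add: algebra_simps power2_eq_square)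
next
  case (NMul b1 b2)
  then have "derivable n T
      ((ncf_eval (NVar i) * ncf_eval b1 - ncf_eval b1 * ncf_eval (NVar i)) * ncf_eval b2 +
       ncf_eval b1 * (ncf_eval (NVar i) * ncf_eval b2 - ncf_eval b2 * ncf_eval (NVar i)))
      ((3 * ncf_size b1 ^ 2 + ncf_size b2 + 1) + (3 * ncf_size b2 ^ 2 + ncf_size b1 + 1) + 1)"
    by (intro derivable_add derivable_mult_left derivable_mult_right) auto
  then show ?case by (rule derivable_cong) (simp_all add: algebra_simps power2_eq_square)
qed

lemma derivable_commutator:
  assumes "ncf_vars b \<subseteq> {1..n}"
  shows "ncf_vars a \<subseteq> {1..n} \<Longrightarrow>
    derivable n T (ncf_eval a * ncf_eval b - ncf_eval b * ncf_eval a) (9 * ncf_size a ^ 2 * ncf_size b ^ 2)"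
proof (induction a)
  define B where "B = ncf_size b ^ 2"
  have B: "1 \<le> B" using ncf_size_pos[of b] by (simp add: B_def)
  {
    case (NVar i)
    then show ?case using derivable_commutator_NVar[of i n b T] assms by (auto elim: derivable_mono)
  next
    case (NConst c)
    show ?case using B by (simp add: derivable_zero single_zero_mult_commute B_def)
  next
    case (NAdd a1 a2)
    then have "derivable n T
        (ncf_eval a1 * ncf_eval b - ncf_eval b * ncf_eval a1 + (ncf_eval a2 * ncf_eval b - ncf_eval b * ncf_eval a2))
        (9 * ncf_size a1 ^ 2 * B + 9 * ncf_size a2 ^ 2 * B + 1)"
      unfolding B_def by (intro derivable_add) auto
    then show ?case
      by (rule derivable_cong) (unfold B_def[symmetric], use B in \<open>simp_all add: algebra_simps power2_eq_square\<close>)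
  next
    case (NMul a1 a2)
    then have "derivable n T
        (ncf_eval a1 * (ncf_eval a2 * ncf_eval b - ncf_eval b * ncf_eval a2) +
         (ncf_eval a1 * ncf_eval b - ncf_eval b * ncf_eval a1) * ncf_eval a2)
        ((9 * ncf_size a2 ^ 2 * B + ncf_size a1 + 1) + (9 * ncf_size a1 ^ 2 * B + ncf_size a2 + 1) + 1)"
      unfolding B_def by (intro derivable_add derivable_mult_left derivable_mult_right) auto
    moreover have "(9 * ncf_size a2 ^ 2 * B + ncf_size a1 + 1) + (9 * ncf_size a1 ^ 2 * B + ncf_size a2 + 1) + 1
        \<le> 9 * ncf_size (NMul a1 a2) ^ 2 * B"
    proof -
      have "ncf_size a1 \<le> B * (ncf_size a1 * 18)" "ncf_size a2 \<le> B * (ncf_size a2 * 18)" "3 \<le> B * 9"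
        using B by simp_all
      then show ?thesis by (simp add: power2_eq_square algebra_simps, linarith)
    qed
    ultimately show ?case unfolding B_def by (elim derivable_cong) (simp add: algebra_simps)
  }
qed

lemma derivable_tr_commutator:
  "atoms A \<subseteq> {1..n} \<Longrightarrow> atoms B \<subseteq> {1..n} \<Longrightarrow>
   derivable n T (tr_eval A * tr_eval B - tr_eval B * tr_eval A) (9 * tr_size A ^ 2 * tr_size B ^ 2)"
  using derivable_commutator[of "tr B" n "tr A" T] by simp

lemma derivable_boolean_FOr:
  assumes "atoms U \<subseteq> {1..n}" "atoms V \<subseteq> {1..n}"
    and "derivable n T ((tr_eval U :: 'a::comm_ring_1 free_alg) * (1 - tr_eval U)) s\<^sub>U"
    and "derivable n T ((tr_eval V :: 'a free_alg) * (1 - tr_eval V)) s\<^sub>V"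
    and "derivable n T ((tr_eval U :: 'a free_alg) * tr_eval V - tr_eval V * tr_eval U) s\<^sub>C"
  shows "derivable n T ((tr_eval (FOr U V) :: 'a free_alg) * (1 - tr_eval (FOr U V)))
    (s\<^sub>U + s\<^sub>V + s\<^sub>C + 3 * tr_size U + 2 * tr_size V + 7)"
proof -
  have "derivable n T ((tr_eval U :: 'a free_alg) * (1 - tr_eval U) * tr_eval V
      + tr_eval U * (tr_eval U * tr_eval V - tr_eval V * tr_eval U) * tr_eval V
      + tr_eval (FOr U U) * (tr_eval V * (1 - tr_eval V)))
    ((s\<^sub>U + tr_size V + 1) + ((s\<^sub>C + tr_size U + 1) + tr_size V + 1) + 1 + (s\<^sub>V + tr_size (FOr U U) + 1) + 1)"
    using assms by (intro derivable_add derivable_tr_mult_left derivable_tr_mult_right) auto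
  then show ?thesis by (rule derivable_cong) (simp_all add: algebra_simps)
qed

lemma boolean_FOr_size_le:
  assumes "a \<le> N" "b \<le> N" "1 \<le> N"
  shows "9 * a\<^sup>2 * b\<^sup>2 + 3 * a + 2 * b + 7 \<le> 21 * (N::nat) ^ 4"
proof -
  have "a\<^sup>2 * b\<^sup>2 \<le> N ^ 4" "a \<le> N ^ 4" "b \<le> N ^ 4" "1 \<le> N ^ 4"
    using assms by (simp_all add: nat_sq_mult_sq_le nat_le_power)
  then show ?thesis unfolding mult.assoc by linarith
qed

lemma derivable_tr_boolean:
  "atoms A \<subseteq> {1..n} \<Longrightarrow> tr_size A \<le> N \<Longrightarrow>
   derivable n T (tr_eval A * (1 - tr_eval A)) (fsize A * (21 * N ^ 4))"
proof (induction A)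
  case (FVar i)
  then show ?case by (auto intro!: derivable_mono[OF derivable_boolean_axiom])
next
  case (FNot A)
  then show ?case by (auto elim!: derivable_cong simp: algebra_simps)
next
  case (FOr A B)
  have "derivable n T ((tr_eval (FOr A B) :: 'a free_alg) * (1 - tr_eval (FOr A B)))
      (fsize A * (21 * N ^ 4) + fsize B * (21 * N ^ 4) +
       9 * tr_size A ^ 2 * tr_size B ^ 2 + 3 * tr_size A + 2 * tr_size B + 7)"
    using FOr by (intro derivable_boolean_FOr derivable_tr_commutator) auto
  moreover have "9 * tr_size A ^ 2 * tr_size B ^ 2 + 3 * tr_size A + 2 * tr_size B + 7 \<le> 21 * N ^ 4"
    using FOr.prems by (intro boolean_FOr_size_le) auto
  ultimately show ?case by (elim derivable_mono) (simp add: algebra_simps)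
next
  case (FAnd A B)
  let ?U = "FNot A" and ?V = "FNot B"
  have "derivable n T ((tr_eval ?U :: 'a free_alg) * (1 - tr_eval ?U)) (fsize A * (21 * N ^ 4))"
    "derivable n T ((tr_eval ?V :: 'a free_alg) * (1 - tr_eval ?V)) (fsize B * (21 * N ^ 4))"
    using FAnd by (auto elim!: derivable_cong simp: algebra_simps)
  then have "derivable n T ((tr_eval (FOr ?U ?V) :: 'a free_alg) * (1 - tr_eval (FOr ?U ?V)))
      (fsize A * (21 * N ^ 4) + fsize B * (21 * N ^ 4) +
       9 * tr_size ?U ^ 2 * tr_size ?V ^ 2 + 3 * tr_size ?U + 2 * tr_size ?V + 7)"
    using FAnd.prems by (intro derivable_boolean_FOr derivable_tr_commutator) auto
  moreover have "9 * tr_size ?U ^ 2 * tr_size ?V ^ 2 + 3 * tr_size ?U + 2 * tr_size ?V + 7 \<le> 21 * N ^ 4"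
    using FAnd.prems by (intro boolean_FOr_size_le) auto
  ultimately show ?case by (elim derivable_cong) (simp_all add: algebra_simps)
qed (auto intro: derivable_zero)

section \<open>Substitution instances of tautologies\<close>

lemma atoms_fsubst: "atoms (fsubst \<sigma> A) = (\<Union>w\<in>atoms A. atoms (\<sigma> w))"
  by (induction A) auto

lemma fsubst_fsubst: "fsubst \<sigma> (fsubst \<tau> A) = fsubst (\<lambda>i. fsubst \<sigma> (\<tau> i)) A"
  by (induction A) auto

lemma feval_fsubst: "feval a (fsubst \<tau> A) = feval (\<lambda>i. feval a (\<tau> i)) A"
  by (induction A) auto

lemma fsubst_cong: "(\<And>w. w \<in> atoms A \<Longrightarrow> \<sigma> w = \<tau> w) \<Longrightarrow> fsubst \<sigma> A = fsubst \<tau> A"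
  by (induction A) auto

lemma fsubst_FVar: "fsubst FVar A = A"
  by (induction A) auto

lemma finite_atoms: "finite (atoms A)"
  by (induction A) auto

lemma tr_size_fsubst_le:
  assumes "\<And>w. tr_size (\<sigma> w) \<le> m"
  shows "tr_size (fsubst \<sigma> A) \<le> 13 * fsize A * m"
proof -
  have "1 \<le> m" using assms[of 0] tr_size_pos le_trans by blast
  then show ?thesis
  proof (induction A)
    case (FVar w)
    then show ?case using assms[of w] by simp
  qed (auto simp: algebra_simps)
qed

lemma derivable_left_mult_FOr_diff:
  assumes "derivable n T ((tr_eval Z :: 'a::comm_ring_1 free_alg) * tr_eval A - tr_eval Z * tr_eval A') s\<^sub>A"
    and "derivable n T ((tr_eval Z :: 'a free_alg) * tr_eval B - tr_eval Z * tr_eval B') s\<^sub>B"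
    and "atoms Z \<subseteq> {1..n}" "atoms A' \<subseteq> {1..n}" "atoms B \<subseteq> {1..n}" "atoms B' \<subseteq> {1..n}"
    and "tr_size Z \<le> M" "tr_size A' \<le> M" "tr_size B \<le> M" "tr_size B' \<le> M"
  shows "derivable n T ((tr_eval Z :: 'a free_alg) * tr_eval (FOr A B) - tr_eval Z * tr_eval (FOr A' B'))
    (s\<^sub>A + s\<^sub>B + 40 * M ^ 4)"
proof -
  let ?z = "tr_eval Z :: 'a free_alg" and ?C = "9 * tr_size Z ^ 2 * tr_size A' ^ 2"
  \<comment> \<open>commuting \<open>Z\<close> past \<open>A'\<close> is what lets the two differences be combined\<close>
  have "derivable n T ((?z * tr_eval A - ?z * tr_eval A') * tr_eval B + (?z * tr_eval A' - tr_eval A' * ?z) * tr_eval B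
      + tr_eval A' * (?z * tr_eval B - ?z * tr_eval B') - (?z * tr_eval A' - tr_eval A' * ?z) * tr_eval B')
    ((s\<^sub>A + tr_size B + 1) + (?C + tr_size B + 1) + 1 + (s\<^sub>B + tr_size A' + 1) + 1 + (?C + tr_size B' + 1) + 3)"
    using assms
    by (intro derivable_diff derivable_add derivable_tr_mult_left derivable_tr_mult_right derivable_tr_commutator)
  moreover have "?C \<le> 9 * M ^ 4" "tr_size A' \<le> M ^ 4" "tr_size B \<le> M ^ 4" "tr_size B' \<le> M ^ 4" "1 \<le> M ^ 4"
    using assms(7-10) tr_size_pos[of Z]
    by (simp_all add: nat_sq_mult_sq_le nat_le_power mult.assoc)
  ultimately show ?thesis by (elim derivable_cong) (simp_all add: algebra_simps)
qed

lemma derivable_left_mult_fsubst_diff: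
  fixes Z :: fm
  assumes agree: "\<And>w. w \<noteq> v \<Longrightarrow> \<rho> w = \<sigma> w"
    and atoms: "\<And>w. atoms (\<sigma> w) \<subseteq> {1..n}" "\<And>w. atoms (\<rho> w) \<subseteq> {1..n}" "atoms Z \<subseteq> {1..n}"
    and size_Z: "tr_size Z \<le> M"
    and base: "derivable n T ((tr_eval Z :: 'a::comm_ring_1 free_alg) * tr_eval (\<sigma> v) - tr_eval Z * tr_eval (\<rho> v))
      (50 * M ^ 5)"
  shows "tr_size (fsubst \<sigma> G) \<le> M \<Longrightarrow> tr_size (fsubst \<rho> G) \<le> M \<Longrightarrow>
    derivable n T ((tr_eval Z :: 'a free_alg) * tr_eval (fsubst \<sigma> G) - tr_eval Z * tr_eval (fsubst \<rho> G))
      (fsize G * (50 * M ^ 5))"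
proof (induction G)
  let ?z = "tr_eval Z :: 'a free_alg"
  have M: "1 \<le> M" using size_Z tr_size_pos[of Z] by linarith
  then have slack: "40 * M ^ 4 + 6 \<le> 50 * M ^ 5"
    using power_increasing[of 4 5 M] nat_le_power[of 1 M 5] by linarith
  have at: "atoms (fsubst \<sigma> A) \<subseteq> {1..n}" "atoms (fsubst \<rho> A) \<subseteq> {1..n}" for A
    using atoms by (auto simp: atoms_fsubst)
  {
    case (FVar w)
    show ?case
    proof (cases "w = v")
      case False
      then show ?thesis using agree M by (simp add: derivable_zero)
    qed (use base in simp)
  next
    case FTrue
    show ?case using M by (simp add: derivable_zero)
  next
    case FFalse
    show ?case using M by (simp add: derivable_zero)
  next
    case (FNot A)
    then show ?case by (auto elim!: derivable_cong[OF derivable_uminus] simp: algebra_simps)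
  next
    case (FOr A B)
    then have "derivable n T
        (?z * tr_eval (FOr (fsubst \<sigma> A) (fsubst \<sigma> B)) - ?z * tr_eval (FOr (fsubst \<rho> A) (fsubst \<rho> B)))
        (fsize A * (50 * M ^ 5) + fsize B * (50 * M ^ 5) + 40 * M ^ 4)"
      using at atoms size_Z by (intro derivable_left_mult_FOr_diff) auto
    then show ?case using slack by (elim derivable_cong) (simp_all add: algebra_simps)
  next
    case (FAnd A B)
    have IH: "derivable n T (?z * tr_eval (fsubst \<sigma> A) - ?z * tr_eval (fsubst \<rho> A)) (fsize A * (50 * M ^ 5))"
      "derivable n T (?z * tr_eval (fsubst \<sigma> B) - ?z * tr_eval (fsubst \<rho> B)) (fsize B * (50 * M ^ 5))"
      using FAnd by auto
    have "derivable n T (?z * tr_eval (FNot (fsubst \<sigma> A)) - ?z * tr_eval (FNot (fsubst \<rho> A)))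
        (fsize A * (50 * M ^ 5) + 2)"
      by (rule derivable_cong[OF derivable_uminus[OF IH(1)]]) (simp_all add: algebra_simps)
    moreover have "derivable n T (?z * tr_eval (FNot (fsubst \<sigma> B)) - ?z * tr_eval (FNot (fsubst \<rho> B)))
        (fsize B * (50 * M ^ 5) + 2)"
      by (rule derivable_cong[OF derivable_uminus[OF IH(2)]]) (simp_all add: algebra_simps)
    ultimately have "derivable n T
        (?z * tr_eval (FOr (FNot (fsubst \<sigma> A)) (FNot (fsubst \<sigma> B)))
          - ?z * tr_eval (FOr (FNot (fsubst \<rho> A)) (FNot (fsubst \<rho> B))))
        ((fsize A * (50 * M ^ 5) + 2) + (fsize B * (50 * M ^ 5) + 2) + 40 * M ^ 4)"
      using FAnd.prems at atoms size_Z by (intro derivable_left_mult_FOr_diff) auto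
    then show ?case using slack
      by (elim derivable_cong[OF derivable_uminus]) (simp_all add: algebra_simps)
  }
qed

lemma case_split_size_le:
  fixes f m t :: nat
  assumes m: "1 \<le> m" and f: "1 \<le> f" and "t \<le> m"
  shows "2 * (f * (50 * (13 * f * m + 4) ^ 5)) + 2 * t + 10 \<le> 17 ^ 7 * f ^ 6 * m ^ 5"
proof -
  have "13 * f * m + 4 \<le> 17 * f * m" using f m by simp
  then have "(13 * f * m + 4) ^ 5 \<le> 17 ^ 5 * f ^ 5 * m ^ 5"
    by (metis power_mono power_mult_distrib zero_le)
  then have "f * (13 * f * m + 4) ^ 5 \<le> f * (17 ^ 5 * f ^ 5 * m ^ 5)"
    by (rule mult_le_mono2)
  also have "\<dots> = 17 ^ 5 * f ^ 6 * m ^ 5"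
    by (simp add: power_eq_if)
  finally have "2 * (f * (50 * (13 * f * m + 4) ^ 5)) \<le> 100 * 17 ^ 5 * f ^ 6 * m ^ 5"
    by (simp add: ac_simps)
  moreover have "2 * t + 10 \<le> 12 * f ^ 6 * m ^ 5"
  proof -
    have "m \<le> m ^ 5" "1 \<le> m ^ 5" using m by (simp_all add: nat_le_power)
    moreover have "m ^ 5 \<le> f ^ 6 * m ^ 5" using f by simp
    ultimately show ?thesis using \<open>t \<le> m\<close> unfolding mult.assoc by linarith
  qed
  ultimately show ?thesis by (simp add: ac_simps)
qed

lemma derivable_tr_fsubst_case_split:
  assumes atoms: "\<And>w. atoms (\<sigma> w) \<subseteq> {1..n}" and size: "\<And>w. tr_size (\<sigma> w) \<le> m"
    and true: "derivable n T (tr_eval (fsubst (\<sigma>(v := FTrue)) G) :: 'a::comm_ring_1 free_alg) s\<^sub>1"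
    and false: "derivable n T (tr_eval (fsubst (\<sigma>(v := FFalse)) G) :: 'a free_alg) s\<^sub>0"
  shows "derivable n T (tr_eval (fsubst \<sigma> G) :: 'a free_alg) (s\<^sub>1 + s\<^sub>0 + 17 ^ 7 * fsize G ^ 6 * m ^ 5)"
proof -
  let ?z = "tr_eval (\<sigma> v) :: 'a free_alg" and ?G = "\<lambda>\<tau>. tr_eval (fsubst \<tau> G) :: 'a free_alg"
  define M where "M = 13 * fsize G * m + 4"
  have m: "1 \<le> m" using size[of v] tr_size_pos[of "\<sigma> v"] by linarith
  have f: "1 \<le> fsize G" by (rule fsize_pos)
  have size_fsubst: "tr_size (fsubst \<tau> G) \<le> M" if "\<And>w. tr_size (\<tau> w) \<le> m" for \<tau>
    using tr_size_fsubst_le[of \<tau> m G] that by (simp add: M_def)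
  have "m \<le> 13 * fsize G * m" using f by simp
  then have size_z: "tr_size (FNot (\<sigma> v)) \<le> M"
    using size[of v] unfolding M_def tr_size.simps by linarith
  have boolean: "derivable n T (?z * (1 - ?z)) (fsize (\<sigma> v) * (21 * M ^ 4))"
    by (rule derivable_tr_boolean) (use atoms[of v] size_z in auto)
  have boolean_size: "fsize (\<sigma> v) * (21 * M ^ 4) + 2 \<le> 50 * M ^ 5"
  proof -
    have "fsize (\<sigma> v) * (21 * M ^ 4) \<le> M * (21 * M ^ 4)"
      using fsize_le_tr_size[of "\<sigma> v"] size_z by (intro mult_le_mono1) simp
    moreover have "M * (21 * M ^ 4) = 21 * M ^ 5" by (simp add: power_eq_if)
    moreover have "1 \<le> M ^ 5" by (simp add: M_def)
    ultimately show ?thesis by linarith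
  qed
  \<comment> \<open>Shannon expansion \<open>G = (1 - z) G + z G\<close> along \<open>z = tr (\<sigma> v)\<close>, which is Boolean\<close>
  have base_true: "derivable n T (tr_eval (FNot (\<sigma> v)) * ?z - tr_eval (FNot (\<sigma> v)) * tr_eval FTrue) (50 * M ^ 5)"
    by (rule derivable_cong[OF boolean]) (use boolean_size in \<open>simp_all add: algebra_simps\<close>)
  have base_false: "derivable n T (?z * ?z - ?z * tr_eval FFalse) (50 * M ^ 5)"
    by (rule derivable_cong[OF derivable_uminus[OF boolean]])
      (use boolean_size in \<open>simp_all add: algebra_simps\<close>)
  have "derivable n T (tr_eval (FNot (\<sigma> v)) * ?G \<sigma> - tr_eval (FNot (\<sigma> v)) * ?G (\<sigma>(v := FTrue)))
      (fsize G * (50 * M ^ 5))"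
    using atoms size size_z m base_true
    by (intro derivable_left_mult_fsubst_diff[where v = v] size_fsubst) auto
  moreover have "derivable n T (?z * ?G \<sigma> - ?z * ?G (\<sigma>(v := FFalse))) (fsize G * (50 * M ^ 5))"
    using atoms size size_z m base_false
    by (intro derivable_left_mult_fsubst_diff[where v = v] size_fsubst) auto
  ultimately have "derivable n T
      ((tr_eval (FNot (\<sigma> v)) * ?G \<sigma> - tr_eval (FNot (\<sigma> v)) * ?G (\<sigma>(v := FTrue)))
        + tr_eval (FNot (\<sigma> v)) * ?G (\<sigma>(v := FTrue))
       + ((?z * ?G \<sigma> - ?z * ?G (\<sigma>(v := FFalse))) + ?z * ?G (\<sigma>(v := FFalse))))
      ((fsize G * (50 * M ^ 5)) + (s\<^sub>1 + tr_size (FNot (\<sigma> v)) + 1) + 1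
       + ((fsize G * (50 * M ^ 5)) + (s\<^sub>0 + tr_size (\<sigma> v) + 1) + 1) + 1)"
    using atoms[of v] true false by (intro derivable_add derivable_tr_mult_left) auto
  moreover have "2 * (fsize G * (50 * M ^ 5)) + 2 * tr_size (\<sigma> v) + 10 \<le> 17 ^ 7 * fsize G ^ 6 * m ^ 5"
    unfolding M_def using m f size[of v] by (rule case_split_size_le)
  ultimately show ?thesis by (elim derivable_cong) (simp_all add: algebra_simps)
qed

lemma tr_eval_closed:
  "atoms G = {} \<Longrightarrow> tr_eval G = (if feval a G then 0 else 1 :: 'a::comm_ring_1 free_alg)"
  by (induction G) (auto simp: algebra_simps)

text \<open>The factor \<open>3\<close> per atom pays for the two branches of a Shannon expansion.\<close>

definition taut_size :: "fm \<Rightarrow> nat" where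
  "taut_size G = 17 ^ 7 * fsize G ^ 6 * 3 ^ card (atoms G)"

lemma card_atoms_fsubst_closed_atom:
  assumes "v \<in> atoms G" "atoms c = {}"
  shows "card (atoms (fsubst (FVar(v := c)) G)) < card (atoms G)"
proof -
  have "atoms (fsubst (FVar(v := c)) G) \<subseteq> atoms G - {v}"
    using assms(2) by (auto simp: atoms_fsubst split: if_splits)
  then show ?thesis
    using assms(1) finite_atoms by (meson card_Diff1_less card_mono finite_Diff order_le_less_trans)
qed

lemma fsize_fsubst_atom: "fsize c = 1 \<Longrightarrow> fsize (fsubst (FVar(v := c)) G) = fsize G"
  by (induction G) auto

lemma taut_size_fsubst_closed_atom:
  assumes "v \<in> atoms G" "atoms c = {}" "fsize c = 1"
  shows "3 * taut_size (fsubst (FVar(v := c)) G) \<le> taut_size G"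
proof -
  have "3 * 3 ^ card (atoms (fsubst (FVar(v := c)) G)) \<le> (3::nat) ^ card (atoms G)"
    using card_atoms_fsubst_closed_atom[OF assms(1,2)]
    by (metis Suc_leI power_Suc power_increasing one_le_numeral)
  then show ?thesis
    using assms(3) by (simp add: taut_size_def fsize_fsubst_atom)
qed

lemma derivable_tautology_fsubst:
  assumes "tautology G" and atoms: "\<And>w. atoms (\<sigma> w) \<subseteq> {1..n}" and size: "\<And>w. tr_size (\<sigma> w) \<le> m"
  shows "derivable n T (tr_eval (fsubst \<sigma> G) :: 'a::comm_ring_1 free_alg) (taut_size G * m ^ 5)"
  using assms(1)
proof (induction "card (atoms G)" arbitrary: G rule: less_induct)
  case less
  have m: "1 \<le> m" using size[of 0] tr_size_pos[of "\<sigma> 0"] by linarith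
  show ?case
  proof (cases "atoms G = {}")
    case True
    then have "fsubst \<sigma> G = G" using fsubst_cong[of G \<sigma> FVar] by (simp add: fsubst_FVar)
    moreover have "tr_eval G = (0 :: 'a free_alg)"
      using tr_eval_closed[OF True] less.prems by (simp add: tautology_def)
    moreover have "1 \<le> taut_size G * m ^ 5"
      using m fsize_pos[of G] by (simp add: taut_size_def)
    ultimately show ?thesis by (simp add: derivable_zero)
  next
    case False
    then obtain v where v: "v \<in> atoms G" by blast
    have fixed: "derivable n T (tr_eval (fsubst (\<sigma>(v := c)) G) :: 'a free_alg)
        (taut_size (fsubst (FVar(v := c)) G) * m ^ 5)"
      and fixed_size: "3 * (taut_size (fsubst (FVar(v := c)) G) * m ^ 5) \<le> taut_size G * m ^ 5"
      if c: "c \<in> {FTrue, FFalse}" for c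
    proof -
      let ?G = "fsubst (FVar(v := c)) G"
      have "fsubst \<sigma> ?G = fsubst (\<sigma>(v := c)) G"
        using c by (auto simp: fsubst_fsubst intro: fsubst_cong)
      moreover have "tautology ?G"
        using less.prems by (simp add: tautology_def feval_fsubst)
      moreover have "card (atoms ?G) < card (atoms G)"
        using c v by (intro card_atoms_fsubst_closed_atom) auto
      ultimately show "derivable n T (tr_eval (fsubst (\<sigma>(v := c)) G) :: 'a free_alg) (taut_size ?G * m ^ 5)"
        using less.hyps[of ?G] by simp
      have "3 * taut_size ?G \<le> taut_size G"
        using c v by (intro taut_size_fsubst_closed_atom) auto
      then show "3 * (taut_size ?G * m ^ 5) \<le> taut_size G * m ^ 5"
        using mult_le_mono1 by (simp add: mult.assoc[symmetric])
    qed
    have "card (atoms G) \<noteq> 0"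
      using v finite_atoms[of G] by auto
    then have "3 ^ 1 \<le> (3::nat) ^ card (atoms G)"
      by (intro power_increasing) auto
    then have "3 * (17 ^ 7 * fsize G ^ 6 * m ^ 5) \<le> taut_size G * m ^ 5"
      unfolding taut_size_def using mult_le_mono1 mult_le_mono2 by (simp add: ac_simps)
    moreover have "derivable n T (tr_eval (fsubst \<sigma> G) :: 'a free_alg)
        (taut_size (fsubst (FVar(v := FTrue)) G) * m ^ 5 + taut_size (fsubst (FVar(v := FFalse)) G) * m ^ 5
          + 17 ^ 7 * fsize G ^ 6 * m ^ 5)"
      by (rule derivable_tr_fsubst_case_split[where v = v, OF atoms size]) (simp_all add: fixed)
    moreover have "3 * (taut_size (fsubst (FVar(v := FTrue)) G) * m ^ 5) \<le> taut_size G * m ^ 5"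
      "3 * (taut_size (fsubst (FVar(v := FFalse)) G) * m ^ 5) \<le> taut_size G * m ^ 5"
      by (simp_all add: fixed_size)
    ultimately show ?thesis by (elim derivable_mono) linarith
  qed
qed

section \<open>Frege proofs\<close>

primrec conj_list :: "fm list \<Rightarrow> fm" where
  "conj_list [] = FTrue"
| "conj_list (P # Ps) = FAnd P (conj_list Ps)"

definition rule_implication :: "rule \<Rightarrow> fm" where
  "rule_implication r = FOr (snd r) (FNot (conj_list (fst r)))"

lemma feval_conj_list: "feval a (conj_list Ps) \<longleftrightarrow> (\<forall>P\<in>set Ps. feval a P)"
  by (induction Ps) auto

lemma atoms_conj_list: "atoms (conj_list Ps) = (\<Union>P\<in>set Ps. atoms P)"
  by (induction Ps) auto

lemma tautology_rule_implication: "sound_rule r \<Longrightarrow> tautology (rule_implication r)"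
  unfolding tautology_def rule_implication_def sound_rule_def by (auto simp: feval_conj_list)

lemma atoms_rule_implication:
  "atoms (rule_implication r) = atoms (snd r) \<union> (\<Union>P\<in>set (fst r). atoms P)"
  unfolding rule_implication_def by (simp add: atoms_conj_list)

lemma tr_size_atom_le_fsubst: "w \<in> atoms A \<Longrightarrow> tr_size (\<sigma> w) \<le> tr_size (fsubst \<sigma> A)"
  by (induction A) auto

lemma derivation_fsubst:
  assumes "derivation R {} \<pi>"
  shows "derivation R {} (map (fsubst \<rho>) \<pi>)"
  unfolding derivation_def
proof (intro allI impI)
  fix k assume "k < length (map (fsubst \<rho>) \<pi>)"
  then have k: "k < length \<pi>" by simp
  then obtain r \<sigma> where r: "r \<in> R" "fsubst \<sigma> (snd r) = \<pi> ! k"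
     "\<forall>P\<in>set (fst r). \<exists>j<k. \<pi> ! j = fsubst \<sigma> P"
    using assms unfolding derivation_def by blast
  have "fsubst (\<lambda>i. fsubst \<rho> (\<sigma> i)) (snd r) = map (fsubst \<rho>) \<pi> ! k"
    using r(2) k by (simp add: fsubst_fsubst[symmetric])
  moreover have "\<exists>j<k. map (fsubst \<rho>) \<pi> ! j = fsubst (\<lambda>i. fsubst \<rho> (\<sigma> i)) P"
    if "P \<in> set (fst r)" for P
    using r(3) that k by (fastforce simp: fsubst_fsubst[symmetric])
  ultimately show "map (fsubst \<rho>) \<pi> ! k \<in> {} \<or> (\<exists>r\<in>R. \<exists>\<sigma>. fsubst \<sigma> (snd r) = map (fsubst \<rho>) \<pi> ! k \<and>
        (\<forall>P\<in>set (fst r). \<exists>j<k. map (fsubst \<rho>) \<pi> ! j = fsubst \<sigma> P))"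
    using r(1) by blast
qed

definition clamp_atoms :: "nat \<Rightarrow> nat \<Rightarrow> fm" where
  "clamp_atoms n i = (if i \<in> {1..n} then FVar i else FTrue)"

lemma frege_proof_clamp_atoms:
  assumes "frege_proof R \<pi> T" "atoms T \<subseteq> {1..n}"
  defines "\<pi>' \<equiv> map (fsubst (clamp_atoms n)) \<pi>"
  shows "frege_proof R \<pi>' T" and "proof_size \<pi>' \<le> proof_size \<pi>"
    and "\<And>A. A \<in> set \<pi>' \<Longrightarrow> atoms A \<subseteq> {1..n}"
proof -
  have "fsubst (clamp_atoms n) T = fsubst FVar T"
    by (rule fsubst_cong) (use assms(2) in \<open>auto simp: clamp_atoms_def\<close>)
  then show "frege_proof R \<pi>' T"
    using assms(1) derivation_fsubst unfolding frege_proof_def \<pi>'_def by (auto simp: last_map fsubst_FVar)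
  have "fsize (fsubst (clamp_atoms n) A) \<le> fsize A" for A
    by (induction A) (auto simp: clamp_atoms_def)
  then show "proof_size \<pi>' \<le> proof_size \<pi>"
    unfolding proof_size_def \<pi>'_def map_map by (intro sum_list_mono) simp
  show "\<And>A. A \<in> set \<pi>' \<Longrightarrow> atoms A \<subseteq> {1..n}"
    by (auto simp: \<pi>'_def atoms_fsubst clamp_atoms_def split: if_splits)
qed

primrec neg_disj :: "fm list \<Rightarrow> nat \<Rightarrow> fm" where
  "neg_disj \<pi> 0 = FFalse"
| "neg_disj \<pi> (Suc k) = FOr (FNot (\<pi> ! k)) (neg_disj \<pi> k)"

locale bounded_derivation =
  fixes R :: "rule set" and K :: nat and \<pi> :: "fm list" and n N :: nat
  assumes derivation: "derivation R {} \<pi>"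
    and sound: "\<And>r. r \<in> R \<Longrightarrow> sound_rule r"
    and rule_bounds: "\<And>r. r \<in> R \<Longrightarrow> length (fst r) \<le> K \<and> taut_size (rule_implication r) \<le> K"
    and atoms_line: "\<And>j. j < length \<pi> \<Longrightarrow> atoms (\<pi> ! j) \<subseteq> {1..n}"
    and size_line: "\<And>j. j < length \<pi> \<Longrightarrow> tr_size (\<pi> ! j) + 4 \<le> N"
    and size_neg_disj: "\<And>k. k \<le> length \<pi> \<Longrightarrow> tr_size (neg_disj \<pi> k) \<le> N"
    and length_le: "length \<pi> \<le> N"
begin

lemma one_le_N: "1 \<le> N"
  using size_neg_disj[of 0] by simp

lemma atoms_neg_disj: "k \<le> length \<pi> \<Longrightarrow> atoms (neg_disj \<pi> k) \<subseteq> {1..n}"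
proof (induction k)
  case (Suc k)
  then show ?case using atoms_line[of k] by simp
qed simp

lemma derivable_earlier_line_neg_disj:
  "k \<le> length \<pi> \<Longrightarrow> j < k \<Longrightarrow>
   derivable n T (tr_eval (\<pi> ! j) * tr_eval (neg_disj \<pi> k) :: 'a::comm_ring_1 free_alg) (k * (50 * N ^ 5))"
proof (induction k arbitrary: j)
  case (Suc k)
  let ?D = "tr_eval (neg_disj \<pi> k) :: 'a free_alg" and ?L = "\<lambda>i. tr_eval (\<pi> ! i) :: 'a free_alg"
  have k: "k < length \<pi>" using Suc by simp
  have N: "N \<le> N ^ 5" "1 \<le> N ^ 5" using one_le_N by (simp_all add: nat_le_power)
  show ?case
  proof (cases "j = k")
    case True
    have "derivable n T (?L k * (1 - ?L k) * ?D) (fsize (\<pi> ! k) * (21 * N ^ 4) + tr_size (neg_disj \<pi> k) + 1)"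
      using k size_line[OF k] atoms_line[OF k] atoms_neg_disj[of k]
      by (intro derivable_tr_mult_right derivable_tr_boolean) auto
    moreover have "fsize (\<pi> ! k) * (21 * N ^ 4) \<le> 21 * N ^ 5"
      using fsize_le_tr_size[of "\<pi> ! k"] size_line[OF k] mult_le_mono1[of "fsize (\<pi> ! k)" N "21 * N ^ 4"]
      by (simp add: power_eq_if)
    ultimately show ?thesis
      using True N size_neg_disj[of k] k by (elim derivable_cong) (simp_all add: algebra_simps)
  next
    case False
    then have j: "j < k" using Suc by simp
    \<comment> \<open>move \<open>\<not> \<pi>\<^sub>k\<close> to the front, at the cost of a commutator\<close>
    have "derivable n T (tr_eval (FNot (\<pi> ! k)) * (?L j * ?D) - (?L j * ?L k - ?L k * ?L j) * ?D)
        ((k * (50 * N ^ 5) + tr_size (FNot (\<pi> ! k)) + 1)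
          + (9 * tr_size (\<pi> ! j) ^ 2 * tr_size (\<pi> ! k) ^ 2 + tr_size (neg_disj \<pi> k) + 1) + 3)"
      using Suc j k atoms_line[OF k] atoms_line[of j] atoms_neg_disj[of k]
      by (intro derivable_diff derivable_tr_mult_left derivable_tr_mult_right derivable_tr_commutator) auto
    moreover have "(k * (50 * N ^ 5) + tr_size (FNot (\<pi> ! k)) + 1)
          + (9 * tr_size (\<pi> ! j) ^ 2 * tr_size (\<pi> ! k) ^ 2 + tr_size (neg_disj \<pi> k) + 1) + 3
        \<le> Suc k * (50 * N ^ 5)"
    proof -
      have "tr_size (\<pi> ! j) ^ 2 * tr_size (\<pi> ! k) ^ 2 \<le> N ^ 4" "N ^ 4 \<le> N ^ 5"
        using size_line[of j] size_line[OF k] j k one_le_N by (simp_all add: nat_sq_mult_sq_le power_increasing)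
      moreover have "Suc k * (50 * N ^ 5) = k * (50 * N ^ 5) + 50 * N ^ 5" by simp
      ultimately show ?thesis using N size_neg_disj[of k] size_line[OF k] k
        unfolding tr_size.simps mult.assoc by linarith
    qed
    ultimately show ?thesis by (elim derivable_cong) (simp_all add: algebra_simps)
  qed
qed simp

lemma derivable_premises_neg_disj:
  "k \<le> length \<pi> \<Longrightarrow> \<forall>P\<in>set Ps. \<exists>j<k. \<pi> ! j = fsubst \<sigma> P \<Longrightarrow>
   derivable n T (tr_eval (fsubst \<sigma> (conj_list Ps)) * tr_eval (neg_disj \<pi> k) :: 'a::comm_ring_1 free_alg)
     (length Ps * (N + 2 + k * (50 * N ^ 5)) + 1)"
proof (induction Ps)
  case Nil
  show ?case by (simp add: derivable_zero)
next
  case (Cons P Ps)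
  let ?D = "tr_eval (neg_disj \<pi> k) :: 'a free_alg" and ?C = "tr_eval (fsubst \<sigma> (conj_list Ps)) :: 'a free_alg"
  obtain j where j: "j < k" "\<pi> ! j = fsubst \<sigma> P" using Cons.prems by auto
  then have "j < length \<pi>" using Cons.prems by simp
  then have "derivable n T (tr_eval (FNot (\<pi> ! j)) * (?C * ?D) + tr_eval (\<pi> ! j) * ?D)
      ((length Ps * (N + 2 + k * (50 * N ^ 5)) + 1) + tr_size (FNot (\<pi> ! j)) + 1 + k * (50 * N ^ 5) + 1)"
    using Cons.IH Cons.prems j(1) atoms_line[of j]
    by (intro derivable_add derivable_tr_mult_left derivable_earlier_line_neg_disj) auto
  then show ?case
    using size_line[of j] \<open>j < length \<pi>\<close> by (elim derivable_cong) (simp_all add: j(2) algebra_simps)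
qed

lemma derivable_line_neg_disj:
  assumes k: "k < length \<pi>"
  shows "derivable n T (tr_eval (\<pi> ! k) * tr_eval (neg_disj \<pi> k) :: 'a::comm_ring_1 free_alg)
    (60 * (K + 1) * N ^ 6)"
proof -
  let ?D = "tr_eval (neg_disj \<pi> k) :: 'a free_alg"
  obtain r \<sigma> where r: "r \<in> R" "fsubst \<sigma> (snd r) = \<pi> ! k"
    "\<forall>P\<in>set (fst r). \<exists>j<k. \<pi> ! j = fsubst \<sigma> P"
    using derivation k unfolding derivation_def by blast
  let ?C = "tr_eval (fsubst \<sigma> (conj_list (fst r))) :: 'a free_alg"
  \<comment> \<open>atoms outside the rule are sent to \<open>FTrue\<close>, so that the substitution is small everywhere\<close>
  define \<sigma>' where "\<sigma>' w = (if w \<in> atoms (rule_implication r) then \<sigma> w else FTrue)" for w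
  have "atoms (\<sigma>' w) \<subseteq> {1..n} \<and> tr_size (\<sigma>' w) \<le> N" for w
  proof (cases "w \<in> atoms (rule_implication r)")
    case True
    have "\<exists>P j. j \<le> k \<and> \<pi> ! j = fsubst \<sigma> P \<and> w \<in> atoms P"
    proof (cases "w \<in> atoms (snd r)")
      case True
      then show ?thesis using r(2) by (intro exI[of _ "snd r"] exI[of _ k]) simp
    next
      case False
      then obtain P where "P \<in> set (fst r)" "w \<in> atoms P"
        using \<open>w \<in> atoms (rule_implication r)\<close> by (auto simp: atoms_rule_implication)
      then show ?thesis using r(3) less_imp_le by blast
    qed
    then obtain P j where "j \<le> k" "\<pi> ! j = fsubst \<sigma> P" "w \<in> atoms P" by blast
    moreover have "j < length \<pi>" using \<open>j \<le> k\<close> k by simp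
    ultimately show ?thesis
      using True atoms_line[of j] size_line[of j] tr_size_atom_le_fsubst[of w P \<sigma>]
      by (auto simp: \<sigma>'_def atoms_fsubst)
  qed (use one_le_N in \<open>simp add: \<sigma>'_def\<close>)
  then have "derivable n T (tr_eval (fsubst \<sigma>' (rule_implication r)) :: 'a free_alg)
      (taut_size (rule_implication r) * N ^ 5)"
    using sound[OF r(1)] by (intro derivable_tautology_fsubst tautology_rule_implication) auto
  moreover have "fsubst \<sigma>' (rule_implication r) = fsubst \<sigma> (rule_implication r)"
    by (rule fsubst_cong) (simp add: \<sigma>'_def)
  ultimately have "derivable n T (tr_eval (\<pi> ! k) * (1 - ?C)) (K * N ^ 5)"
    using rule_bounds[OF r(1)] r(2) by (auto simp: rule_implication_def elim!: derivable_mono)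
  moreover have "derivable n T (?C * ?D) (length (fst r) * (N + 2 + k * (50 * N ^ 5)) + 1)"
    using k r(3) by (intro derivable_premises_neg_disj) auto
  ultimately have "derivable n T (tr_eval (\<pi> ! k) * (1 - ?C) * ?D + tr_eval (\<pi> ! k) * (?C * ?D))
      ((K * N ^ 5 + tr_size (neg_disj \<pi> k) + 1)
        + ((length (fst r) * (N + 2 + k * (50 * N ^ 5)) + 1) + tr_size (\<pi> ! k) + 1) + 1)"
    using k atoms_line[OF k] atoms_neg_disj[of k]
    by (intro derivable_add derivable_tr_mult_left derivable_tr_mult_right) auto
  moreover have "(K * N ^ 5 + tr_size (neg_disj \<pi> k) + 1)
        + ((length (fst r) * (N + 2 + k * (50 * N ^ 5)) + 1) + tr_size (\<pi> ! k) + 1) + 1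
      \<le> 60 * (K + 1) * N ^ 6"
  proof -
    have N: "N \<le> N ^ 6" "1 \<le> N ^ 6" "N ^ 5 \<le> N ^ 6" using one_le_N by (simp_all add: nat_le_power power_increasing)
    have "k * (50 * N ^ 5) \<le> N * (50 * N ^ 5)" using k length_le by simp
    also have "\<dots> = 50 * N ^ 6" by (simp add: power_eq_if)
    finally have "N + 2 + k * (50 * N ^ 5) \<le> 53 * N ^ 6" using N by linarith
    then have "length (fst r) * (N + 2 + k * (50 * N ^ 5)) \<le> K * (53 * N ^ 6)"
      using rule_bounds[OF r(1)] by (intro mult_le_mono) auto
    moreover have "K * N ^ 5 \<le> K * N ^ 6" using N by simp
    moreover have "60 * (K + 1) * N ^ 6 = 60 * (K * N ^ 6) + 60 * N ^ 6" "K * (53 * N ^ 6) = 53 * (K * N ^ 6)"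
      by (simp_all add: algebra_simps)
    ultimately show ?thesis
      using N size_neg_disj[of k] size_line[OF k] k by linarith
  qed
  ultimately show ?thesis by (elim derivable_cong) (simp_all add: algebra_simps)
qed

lemma derivable_one_minus_neg_disj:
  "k \<le> length \<pi> \<Longrightarrow>
   derivable n T (1 - tr_eval (neg_disj \<pi> k) :: 'a::comm_ring_1 free_alg) (k * (60 * (K + 1) * N ^ 6 + 1) + 1)"
proof (induction k)
  case (Suc k)
  then have "derivable n T ((1 - tr_eval (neg_disj \<pi> k)) + tr_eval (\<pi> ! k) * tr_eval (neg_disj \<pi> k) :: 'a free_alg)
      ((k * (60 * (K + 1) * N ^ 6 + 1) + 1) + 60 * (K + 1) * N ^ 6 + 1)"
    by (intro derivable_add derivable_line_neg_disj) auto
  then show ?case by (elim derivable_cong) (simp_all add: algebra_simps)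
qed (simp add: derivable_zero)

lemma derivable_last_line:
  assumes "\<pi> \<noteq> []"
  shows "derivable n T (tr_eval (last \<pi>) :: 'a::comm_ring_1 free_alg) ((60 * K + 116) * N ^ 7)"
proof -
  let ?L = "length \<pi>"
  have last: "last \<pi> = \<pi> ! (?L - 1)" "?L - 1 < ?L" using assms by (simp_all add: last_conv_nth)
  \<comment> \<open>all lines hold together, and the last line holds whenever they do\<close>
  have "derivable n T (tr_eval (\<pi> ! (?L - 1)) * (1 - tr_eval (neg_disj \<pi> ?L))
        + tr_eval (\<pi> ! (?L - 1)) * tr_eval (neg_disj \<pi> ?L) :: 'a free_alg)
      (((?L * (60 * (K + 1) * N ^ 6 + 1) + 1) + tr_size (\<pi> ! (?L - 1)) + 1) + ?L * (50 * N ^ 5) + 1)"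
    using last(2) atoms_line
    by (intro derivable_add derivable_tr_mult_left derivable_one_minus_neg_disj derivable_earlier_line_neg_disj)
      auto
  then have "derivable n T (tr_eval (last \<pi>) :: 'a free_alg)
      (((?L * (60 * (K + 1) * N ^ 6 + 1) + 1) + tr_size (last \<pi>) + 1) + ?L * (50 * N ^ 5) + 1)"
    by (elim derivable_cong) (simp_all add: last(1) algebra_simps)
  moreover have "((?L * (60 * (K + 1) * N ^ 6 + 1) + 1) + tr_size (last \<pi>) + 1) + ?L * (50 * N ^ 5) + 1
      \<le> (60 * K + 116) * N ^ 7"
  proof -
    have N: "N \<le> N ^ 7" "1 \<le> N ^ 7" "N ^ 6 \<le> N ^ 7" using one_le_N by (simp_all add: nat_le_power power_increasing)
    have "?L * (60 * (K + 1) * N ^ 6 + 1) \<le> N * (60 * (K + 1) * N ^ 6 + 1)"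
      using length_le by (rule mult_le_mono1)
    also have "\<dots> = 60 * (K + 1) * N ^ 7 + N" by (simp add: power_eq_if algebra_simps)
    finally have 1: "?L * (60 * (K + 1) * N ^ 6 + 1) \<le> 60 * (K + 1) * N ^ 7 + N" .
    have "?L * (50 * N ^ 5) \<le> N * (50 * N ^ 5)" using length_le by (rule mult_le_mono1)
    also have "\<dots> = 50 * N ^ 6" by (simp add: power_eq_if)
    finally have 2: "?L * (50 * N ^ 5) \<le> 50 * N ^ 7" using N by linarith
    have "tr_size (last \<pi>) \<le> N" using size_line[OF last(2)] last(1) by simp
    then show ?thesis using 1 2 N by (simp add: algebra_simps)
  qed
  ultimately show ?thesis by (rule derivable_mono)
qed

end

section \<open>The simulation\<close>

lemma fsize_neg_disj: "fsize (neg_disj \<pi> k) = 1 + (\<Sum>i<k. fsize (\<pi> ! i) + 2)"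
  by (induction k) auto

lemma proof_size_conv_sum: "proof_size \<pi> = (\<Sum>i<length \<pi>. fsize (\<pi> ! i))"
  unfolding proof_size_def by (simp add: sum_list_sum_nth atLeast0LessThan)

lemma fsize_nth_le_proof_size: "j < length \<pi> \<Longrightarrow> fsize (\<pi> ! j) \<le> proof_size \<pi>"
  unfolding proof_size_def using elem_le_sum_list[of j "map fsize \<pi>"] by simp

lemma length_le_proof_size: "length \<pi> \<le> proof_size \<pi>"
proof -
  have "length \<pi> = (\<Sum>i<length \<pi>. 1)" by simp
  also have "\<dots> \<le> (\<Sum>i<length \<pi>. fsize (\<pi> ! i))" by (rule sum_mono) (rule fsize_pos)
  finally show ?thesis by (simp add: proof_size_conv_sum)
qed

lemma fsize_neg_disj_le: "k \<le> length \<pi> \<Longrightarrow> fsize (neg_disj \<pi> k) \<le> 3 * proof_size \<pi> + 1"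
proof -
  assume k: "k \<le> length \<pi>"
  have "(\<Sum>i<k. fsize (\<pi> ! i) + 2) \<le> (\<Sum>i<k. 3 * fsize (\<pi> ! i))"
    by (rule sum_mono) (use fsize_pos in \<open>auto simp: algebra_simps\<close>)
  also have "\<dots> \<le> (\<Sum>i<length \<pi>. 3 * fsize (\<pi> ! i))"
    by (rule sum_mono2) (use k in auto)
  finally show ?thesis by (simp add: fsize_neg_disj proof_size_conv_sum sum_distrib_left)
qed

definition frege_const :: "rule set \<Rightarrow> nat" where
  "frege_const R = (\<Sum>r\<in>R. length (fst r) + taut_size (rule_implication r))"

lemma bounded_derivation_frege_proof:
  assumes R: "frege_system R"
    and \<pi>: "frege_proof R \<pi> T" "\<And>A. A \<in> set \<pi> \<Longrightarrow> atoms A \<subseteq> {1..n}"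
  shows "bounded_derivation R (frege_const R) \<pi> n (52 * proof_size \<pi>)"
proof -
  have "1 \<le> proof_size \<pi>"
    using \<pi>(1) length_le_proof_size[of \<pi>] by (cases \<pi>) (auto simp: frege_proof_def)
  show ?thesis
  proof
    show "derivation R {} \<pi>" using \<pi>(1) by (simp add: frege_proof_def)
    show "length \<pi> \<le> 52 * proof_size \<pi>" using length_le_proof_size[of \<pi>] by simp
    fix j assume "j < length \<pi>"
    then show "atoms (\<pi> ! j) \<subseteq> {1..n}" using \<pi>(2) by simp
    show "tr_size (\<pi> ! j) + 4 \<le> 52 * proof_size \<pi>"
      using tr_size_le_fsize[of "\<pi> ! j"] fsize_nth_le_proof_size[OF \<open>j < length \<pi>\<close>] fsize_pos[of "\<pi> ! j"]
      by simp
  next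
    fix k assume "k \<le> length \<pi>"
    then show "tr_size (neg_disj \<pi> k) \<le> 52 * proof_size \<pi>"
      using tr_size_le_fsize[of "neg_disj \<pi> k"] fsize_neg_disj_le[of k \<pi>] \<open>1 \<le> proof_size \<pi>\<close>
      by simp
  next
    fix r assume "r \<in> R"
    moreover have "finite R" using R by (simp add: frege_system_def)
    ultimately show "sound_rule r" "length (fst r) \<le> frege_const R \<and> taut_size (rule_implication r) \<le> frege_const R"
      using R member_le_sum[of r R "\<lambda>r. length (fst r) + taut_size (rule_implication r)"]
      by (auto simp: frege_system_def frege_const_def)
  qed
qed

lemma derivable_frege_proof:
  assumes "frege_system R" "frege_proof R \<pi>\<^sub>0 T" "atoms T \<subseteq> {1..n}"
  shows "derivable n T (tr_eval T :: 'a::comm_ring_1 free_alg)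
    ((60 * frege_const R + 116) * 52 ^ 7 * proof_size \<pi>\<^sub>0 ^ 7)"
proof -
  let ?C = "60 * frege_const R + 116"
  \<comment> \<open>atoms outside \<open>{1..n}\<close> may occur in the proof; they are replaced by \<open>FTrue\<close>\<close>
  define \<pi> where "\<pi> = map (fsubst (clamp_atoms n)) \<pi>\<^sub>0"
  have \<pi>: "frege_proof R \<pi> T" "proof_size \<pi> \<le> proof_size \<pi>\<^sub>0" "\<And>A. A \<in> set \<pi> \<Longrightarrow> atoms A \<subseteq> {1..n}"
    using frege_proof_clamp_atoms[OF assms(2,3)] unfolding \<pi>_def by auto
  have "derivable n T (tr_eval (last \<pi>) :: 'a free_alg) (?C * (52 * proof_size \<pi>) ^ 7)"
    using \<pi>(1) bounded_derivation_frege_proof[OF assms(1) \<pi>(1,3)]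
    by (intro bounded_derivation.derivable_last_line) (auto simp: frege_proof_def)
  moreover have "last \<pi> = T" using \<pi>(1) by (simp add: frege_proof_def)
  moreover have "(52 * proof_size \<pi>) ^ 7 \<le> 52 ^ 7 * proof_size \<pi>\<^sub>0 ^ 7"
    using \<pi>(2) by (simp add: power_mult_distrib power_mono)
  then have "?C * (52 * proof_size \<pi>) ^ 7 \<le> ?C * 52 ^ 7 * proof_size \<pi>\<^sub>0 ^ 7"
    unfolding mult.assoc by (rule mult_le_mono2)
  ultimately show ?thesis by (auto elim: derivable_cong)
qed

lemma frege_simulation:
  assumes "frege_system R"
  shows "\<exists>p :: nat poly. \<forall>T n \<pi>. tautology T \<longrightarrow> atoms T \<subseteq> {1..n} \<longrightarrow> frege_proof R \<pi> T \<longrightarrow>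
    (\<exists>\<Phi> :: ('a::comm_ring_1, cvar) ncf. nc_ips_cert n T \<Phi> \<and> ncf_size \<Phi> \<le> poly p (proof_size \<pi>))"
proof (rule exI, intro allI impI)
  let ?p = "monom ((60 * frege_const R + 116) * 52 ^ 7) 7 + 2 :: nat poly"
  fix T n \<pi>
  assume "tautology T" "atoms T \<subseteq> {1..n}" "frege_proof R \<pi> T"
  then obtain \<Phi> :: "('a, cvar) ncf" where
    "nc_ips_cert n T \<Phi>" "ncf_size \<Phi> \<le> (60 * frege_const R + 116) * 52 ^ 7 * proof_size \<pi> ^ 7 + 2"
    using nc_ips_cert_if_derivable derivable_frege_proof[OF assms] by blast
  then show "\<exists>\<Phi> :: ('a, cvar) ncf. nc_ips_cert n T \<Phi> \<and> ncf_size \<Phi> \<le> poly ?p (proof_size \<pi>)"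
    by (auto simp: poly_monom)
qed

theorem theorem1p4:
  shows "(\<forall>R. frege_system R \<longrightarrow>
           (\<exists>p :: nat poly. \<forall>T n \<pi>. tautology T \<longrightarrow> atoms T \<subseteq> {1..n} \<longrightarrow> frege_proof R \<pi> T \<longrightarrow>
              (\<exists>\<Phi> :: (rat, cvar) ncf. nc_ips_cert n T \<Phi> \<and> ncf_size \<Phi> \<le> poly p (proof_size \<pi>))))
       \<and> (\<forall>R. frege_system R \<longrightarrow>
           (\<exists>p :: nat poly. \<forall>T n \<pi>. tautology T \<longrightarrow> atoms T \<subseteq> {1..n} \<longrightarrow> frege_proof R \<pi> T \<longrightarrow>
              (\<exists>\<Phi> :: ('q::prime_card mod_ring, cvar) ncf. nc_ips_cert n T \<Phi> \<and> ncf_size \<Phi> \<le> poly p (proof_size \<pi>))))"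
  by (intro conjI allI impI frege_simulation)

end
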